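(* Let $q$ be a prime power, $k,m$ positive integers with $km$ even, $V=\mathbb F_{q^m}^k$, and let $U$ be a scattered $[\frac{km}{2},k]_{q^m/q}$ system. Then the following are equivalent: (1) $U$ is $(2,m-1)_q$-evasive; (2) $U^{\tau'}$ is a $\left(k-2,\frac{km}{2}-m-1\right)_q$-evasive $[\frac{km}{2},k]_{q^m/q}$ system; (3) $U^{\tau'}$ is a cutting $[\frac{km}{2},k]_{q^m/q}$ system.
   Context: An $[n,k]_{q^m/q}$ system is an $\mathbb F_q$-subspace $U$ of $\mathbb F_{q^m}^k$ with $\dim_{\mathbb F_q}(U)=n$ and $\langle U\rangle_{\mathbb F_{q^m}}=\mathbb F_{q^m}^k$. It is $(h,r)_q$-evasive if $\dim_{\mathbb F_q}(U\cap H)\le r$ for every $h$-dimensional $\mathbb F_{q^m}$-subspace $H$; scattered means $(1,1)_q$-evasive; cutting means $\langle H\cap U\rangle_{\mathbb F_{q^m}}=H$ for every $\mathbb F_{q^m}$-hyperplane $H$. Let $\sigma:V\times V\to\mathbb F_{q^m}$ be a nondegenerate $\mathbb F_{q^m}$-bilinear form and $\sigma'(u,v)=\mathrm{Tr}_{q^m/q}(\sigma(u,v))$, a nondegenerate $\mathbb F_q$-bilinear form on $V$ viewed as a $km$-dimensional $\mathbb F_q$-space. $U^{\tau'}$ denotes the orthogonal complement of $U$ with respect to $\sigma'$ (the dual of $U$). *)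

theory Defs
  imports "HOL-Analysis.Analysis"
begin

text \<open>Setting: the field type 'a plays the role of F_{q^m}; F is a subfield
  with q = card F elements and card UNIV = q^m.  V = 'a^'n with k = CARD('n).\<close>

definition is_subfield :: "'a::field set \<Rightarrow> bool" where
  "is_subfield F \<longleftrightarrow> 0 \<in> F \<and> 1 \<in> F \<and> (\<forall>x\<in>F. \<forall>y\<in>F. x + y \<in> F \<and> x * y \<in> F)
     \<and> (\<forall>x\<in>F. - x \<in> F \<and> inverse x \<in> F)"

text \<open>K-subspace of V, for a subfield K (K = F gives F_q-subspaces, K = UNIV gives F_{q^m}-subspaces).\<close>
definition subspace_over :: "'a::field set \<Rightarrow> ('a^'n) set \<Rightarrow> bool" where
  "subspace_over K U \<longleftrightarrow> 0 \<in> U \<and> (\<forall>x\<in>U. \<forall>y\<in>U. x + y \<in> U)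
     \<and> (\<forall>c\<in>K. \<forall>x\<in>U. c *s x \<in> U)"

definition span_over :: "'a::field set \<Rightarrow> ('a^'n) set \<Rightarrow> ('a^'n) set" where
  "span_over K S = {v. \<exists>T f. finite T \<and> T \<subseteq> S \<and> (\<forall>s\<in>T. f s \<in> K) \<and> v = (\<Sum>s\<in>T. f s *s s)}"

definition dim_over :: "'a::field set \<Rightarrow> ('a^'n) set \<Rightarrow> nat" where
  "dim_over K U = (LEAST n. \<exists>S. finite S \<and> S \<subseteq> U \<and> card S = n \<and> span_over K S = U)"

text \<open>[n,k]_{q^m/q} system (k = CARD('n)).\<close>
definition is_system :: "'a::field set \<Rightarrow> nat \<Rightarrow> ('a^'n) set \<Rightarrow> bool" where
  "is_system F n U \<longleftrightarrow> subspace_over F U \<and> dim_over F U = n \<and> span_over UNIV U = UNIV"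

definition evasive :: "'a::field set \<Rightarrow> int \<Rightarrow> int \<Rightarrow> ('a^'n) set \<Rightarrow> bool" where
  "evasive F h r U \<longleftrightarrow> (\<forall>H. subspace_over UNIV H \<and> int (dim_over UNIV H) = h
       \<longrightarrow> int (dim_over F (U \<inter> H)) \<le> r)"

definition scattered :: "'a::field set \<Rightarrow> ('a^'n) set \<Rightarrow> bool" where
  "scattered F U \<longleftrightarrow> evasive F 1 1 U"

definition cutting :: "'a::field set \<Rightarrow> ('a^'n) set \<Rightarrow> bool" where
  "cutting F U \<longleftrightarrow> (\<forall>H. subspace_over UNIV H \<and> dim_over UNIV H = CARD('n) - 1
       \<longrightarrow> span_over UNIV (H \<inter> U) = H)"

definition trace_over :: "'a::field set \<Rightarrow> nat \<Rightarrow> 'a \<Rightarrow> 'a" where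
  "trace_over F m x = (\<Sum>i<m. x ^ (card F ^ i))"

definition bilinear_form :: "('a^'n \<Rightarrow> 'a^'n \<Rightarrow> 'a::field) \<Rightarrow> bool" where
  "bilinear_form \<sigma> \<longleftrightarrow>
     (\<forall>x y z. \<sigma> (x + y) z = \<sigma> x z + \<sigma> y z \<and> \<sigma> z (x + y) = \<sigma> z x + \<sigma> z y)
   \<and> (\<forall>c x y. \<sigma> (c *s x) y = c * \<sigma> x y \<and> \<sigma> x (c *s y) = c * \<sigma> x y)"

definition nondegenerate_form :: "('a^'n \<Rightarrow> 'a^'n \<Rightarrow> 'a::field) \<Rightarrow> bool" where
  "nondegenerate_form \<sigma> \<longleftrightarrow> (\<forall>x. (\<forall>y. \<sigma> x y = 0) \<longrightarrow> x = 0) \<and> (\<forall>y. (\<forall>x. \<sigma> x y = 0) \<longrightarrow> y = 0)"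

text \<open>Dual U^{tau'}: orthogonal complement w.r.t. sigma'(u,v) = Tr(sigma(u,v)).\<close>
definition dual_system :: "'a::field set \<Rightarrow> nat \<Rightarrow> ('a^'n \<Rightarrow> 'a^'n \<Rightarrow> 'a) \<Rightarrow> ('a^'n) set \<Rightarrow> ('a^'n) set" where
  "dual_system F m \<sigma> U = {v. \<forall>u\<in>U. trace_over F m (\<sigma> u v) = 0}"

end

theory Submission
  imports Defs "HOL-Computational_Algebra.Computational_Algebra" "HOL-Number_Theory.Cong"
begin

text \<open>Everything is counting over finite fields. The trace form \<open>\<sigma>' = Tr \<circ> \<sigma>\<close> is
  \<open>F_q\<close>-bilinear and nondegenerate, so \<open>|X\<^sup>\<perp>| |X| = |V|\<close> for every \<open>F_q\<close>-subspace \<open>X\<close>;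
  applied to \<open>U + W\<close> this gives, for every \<open>F_{q^m}\<close>-subspace \<open>W\<close>,
  \<open>dim\<^sub>q (U\<^sup>\<perp> \<inter> W\<^sup>\<perp>) + dim\<^sub>q U + m dim W = k m + dim\<^sub>q (U \<inter> W)\<close>.
  For \<open>dim\<^sub>q U = k m / 2\<close> and \<open>W \<leftrightarrow> W\<^sup>\<perp>\<close>, this identity translates \<open>(2, m - 1)\<close>-evasiveness
  of \<open>U\<close> into \<open>(k - 2, k m / 2 - m - 1)\<close>-evasiveness of \<open>U\<^sup>\<perp>\<close>. Scatteredness makes
  \<open>U\<^sup>\<perp>\<close> span \<open>V\<close> (otherwise it lies in the complement of a line, which would meet \<open>U\<close>
  in dimension \<open>m \<ge> 2\<close>), and it gives every plane a line meeting \<open>U\<close> trivially. The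
  equivalence with cutting then follows from the identity applied to a hyperplane and
  to a codimension-2 subspace inside it.\<close>

section \<open>Subfields and subspaces\<close>

lemma subfield_0: "is_subfield K \<Longrightarrow> 0 \<in> K"
  and subfield_1: "is_subfield K \<Longrightarrow> 1 \<in> K"
  and subfield_add: "is_subfield K \<Longrightarrow> x \<in> K \<Longrightarrow> y \<in> K \<Longrightarrow> x + y \<in> K"
  and subfield_mult: "is_subfield K \<Longrightarrow> x \<in> K \<Longrightarrow> y \<in> K \<Longrightarrow> x * y \<in> K"
  and subfield_uminus: "is_subfield K \<Longrightarrow> x \<in> K \<Longrightarrow> - x \<in> K"
  and subfield_inverse: "is_subfield K \<Longrightarrow> x \<in> K \<Longrightarrow> inverse x \<in> K"
  by (simp_all add: is_subfield_def)

lemma subfield_diff: "is_subfield K \<Longrightarrow> x \<in> K \<Longrightarrow> y \<in> K \<Longrightarrow> x - y \<in> K"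
  by (metis subfield_add subfield_uminus diff_conv_add_uminus)

lemma subfield_divide: "is_subfield K \<Longrightarrow> x \<in> K \<Longrightarrow> y \<in> K \<Longrightarrow> x / y \<in> K"
  by (metis subfield_mult subfield_inverse divide_inverse)

lemma is_subfield_UNIV: "is_subfield (UNIV :: 'a::field set)"
  by (simp add: is_subfield_def)

lemma card_subfield_ge_2:
  fixes K :: "'a::{field,finite} set"
  assumes "is_subfield K"
  shows "card K \<ge> 2"
proof -
  have "{0, 1} \<subseteq> K" using assms by (simp add: subfield_0 subfield_1)
  thus ?thesis using card_mono[of K "{0, 1}"] by simp
qed

lemma subspace_over_0: "subspace_over K U \<Longrightarrow> 0 \<in> U"
  and subspace_over_add: "subspace_over K U \<Longrightarrow> x \<in> U \<Longrightarrow> y \<in> U \<Longrightarrow> x + y \<in> U"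
  and subspace_over_scale: "subspace_over K U \<Longrightarrow> c \<in> K \<Longrightarrow> x \<in> U \<Longrightarrow> c *s x \<in> U"
  by (simp_all add: subspace_over_def)

lemma subspace_over_uminus:
  "is_subfield K \<Longrightarrow> subspace_over K U \<Longrightarrow> x \<in> U \<Longrightarrow> - x \<in> U"
  by (metis subspace_over_scale subfield_1 subfield_uminus vector_sneg_minus1)

lemma subspace_over_diff:
  "is_subfield K \<Longrightarrow> subspace_over K U \<Longrightarrow> x \<in> U \<Longrightarrow> y \<in> U \<Longrightarrow> x - y \<in> U"
  by (metis subspace_over_add subspace_over_uminus diff_conv_add_uminus)

lemma subspace_over_sum:
  "subspace_over K U \<Longrightarrow> (\<And>t. t \<in> T \<Longrightarrow> h t \<in> U) \<Longrightarrow> sum h T \<in> U"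
  by (induction T rule: infinite_finite_induct) (auto simp: subspace_over_def)

lemma subspace_over_Int:
  "subspace_over K A \<Longrightarrow> subspace_over K B \<Longrightarrow> subspace_over K (A \<inter> B)"
  unfolding subspace_over_def by blast

lemma subspace_over_UNIV: "subspace_over K UNIV"
  by (simp add: subspace_over_def)

lemma subspace_over_UNIV_imp: "subspace_over UNIV U \<Longrightarrow> subspace_over K U"
  by (simp add: subspace_over_def)

lemma subspace_over_set_plus:
  assumes A: "subspace_over K A" and B: "subspace_over K B"
  shows "subspace_over K (A + B)"
  unfolding subspace_over_def
proof (intro conjI ballI)
  show "0 \<in> A + B"
    using subspace_over_0[OF A] subspace_over_0[OF B] by (metis add_0 set_plus_intro)
next
  fix x y assume "x \<in> A + B" "y \<in> A + B"
  then obtain a1 b1 a2 b2 where "x = a1 + b1" "y = a2 + b2" "a1 \<in> A" "a2 \<in> A" "b1 \<in> B" "b2 \<in> B"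
    by (auto elim!: set_plus_elim)
  moreover have "x + y = (a1 + a2) + (b1 + b2)" using calculation by (simp add: algebra_simps)
  ultimately show "x + y \<in> A + B"
    using subspace_over_add[OF A] subspace_over_add[OF B] by (metis set_plus_intro)
next
  fix c x assume c: "c \<in> K" and "x \<in> A + B"
  then obtain a b where "x = a + b" "a \<in> A" "b \<in> B" by (auto elim!: set_plus_elim)
  moreover have "c *s x = c *s a + c *s b" using calculation by (simp add: vector_add_ldistrib)
  ultimately show "c *s x \<in> A + B"
    using subspace_over_scale[OF A c] subspace_over_scale[OF B c] by (metis set_plus_intro)
qed

section \<open>Spans and dimension\<close>

lemma vector_scale_sum: "(c::'a::field) *s sum f A = (\<Sum>x\<in>A. c *s f x)"
  by (induction A rule: infinite_finite_induct) (auto simp: vector_add_ldistrib)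

lemma span_over_eq:
  fixes S :: "('a::{field,finite}^'n) set"
  assumes "0 \<in> K"
  shows "span_over K S = {\<Sum>s\<in>S. g s *s s | g. \<forall>s\<in>S. g s \<in> K}"
proof (intro equalityI subsetI)
  fix v assume "v \<in> span_over K S"
  then obtain T f where T: "finite T" "T \<subseteq> S" "\<forall>s\<in>T. f s \<in> K" "v = (\<Sum>s\<in>T. f s *s s)"
    unfolding span_over_def by blast
  define g where "g s = (if s \<in> T then f s else 0)" for s
  have "(\<Sum>s\<in>S. g s *s s) = (\<Sum>s\<in>T. g s *s s)"
    by (rule sum.mono_neutral_right) (use T in \<open>auto simp: g_def\<close>)
  also have "\<dots> = v" using T by (simp add: g_def)
  moreover have "\<forall>s\<in>S. g s \<in> K" using T assms by (simp add: g_def)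
  ultimately show "v \<in> {\<Sum>s\<in>S. g s *s s | g. \<forall>s\<in>S. g s \<in> K}" by auto
qed (auto simp: span_over_def)

lemma subspace_span_over:
  fixes S :: "('a::{field,finite}^'n) set"
  assumes K: "is_subfield K"
  shows "subspace_over K (span_over K S)"
  unfolding subspace_over_def span_over_eq[OF subfield_0[OF K]]
proof (intro conjI ballI)
  show "0 \<in> {\<Sum>s\<in>S. g s *s s | g. \<forall>s\<in>S. g s \<in> K}"
    using subfield_0[OF K] by (auto intro!: exI[of _ "\<lambda>_. 0"])
next
  fix x y assume "x \<in> {\<Sum>s\<in>S. g s *s s | g. \<forall>s\<in>S. g s \<in> K}" "y \<in> {\<Sum>s\<in>S. g s *s s | g. \<forall>s\<in>S. g s \<in> K}"
  then obtain g1 g2 where "\<forall>s\<in>S. g1 s \<in> K" "x = (\<Sum>s\<in>S. g1 s *s s)"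
    "\<forall>s\<in>S. g2 s \<in> K" "y = (\<Sum>s\<in>S. g2 s *s s)" by blast
  thus "x + y \<in> {\<Sum>s\<in>S. g s *s s | g. \<forall>s\<in>S. g s \<in> K}"
    using subfield_add[OF K]
    by (auto simp: vector_sadd_rdistrib sum.distrib intro!: exI[of _ "\<lambda>s. g1 s + g2 s"])
next
  fix c x assume c: "c \<in> K" and "x \<in> {\<Sum>s\<in>S. g s *s s | g. \<forall>s\<in>S. g s \<in> K}"
  then obtain g where "\<forall>s\<in>S. g s \<in> K" "x = (\<Sum>s\<in>S. g s *s s)" by blast
  thus "c *s x \<in> {\<Sum>s\<in>S. g s *s s | g. \<forall>s\<in>S. g s \<in> K}"
    using subfield_mult[OF K c]
    by (auto simp: vector_scale_sum vector_smult_assoc intro!: exI[of _ "\<lambda>s. c * g s"])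
qed

lemma span_over_superset:
  assumes "is_subfield K"
  shows "S \<subseteq> span_over K S"
proof
  fix x assume "x \<in> S"
  thus "x \<in> span_over K S" unfolding span_over_def
    using subfield_1[OF assms] by (intro CollectI exI[of _ "{x}"] exI[of _ "\<lambda>_. 1"]) auto
qed

lemma span_over_minimal:
  fixes S :: "('a::{field,finite}^'n) set"
  assumes K: "is_subfield K" and U: "subspace_over K U" and "S \<subseteq> U"
  shows "span_over K S \<subseteq> U"
  unfolding span_over_eq[OF subfield_0[OF K]]
  using assms by (auto intro!: subspace_over_sum[OF U] subspace_over_scale[OF U])

lemma span_over_subspace:
  fixes U :: "('a::{field,finite}^'n) set"
  assumes "is_subfield K" "subspace_over K U"
  shows "span_over K U = U"
  using span_over_minimal[OF assms] span_over_superset[OF assms(1)] by blast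

lemma dim_over_le_card:
  fixes S :: "('a::{field,finite}^'n) set"
  assumes "S \<subseteq> U" "span_over K S = U"
  shows "dim_over K U \<le> card S"
  unfolding dim_over_def by (rule Least_le) (use assms in auto)

lemma dim_over_spanning_set:
  fixes U :: "('a::{field,finite}^'n) set"
  assumes "is_subfield K" "subspace_over K U"
  obtains S where "S \<subseteq> U" "card S = dim_over K U" "span_over K S = U"
proof -
  let ?P = "\<lambda>n. \<exists>S. finite S \<and> S \<subseteq> U \<and> card S = n \<and> span_over K S = U"
  have "?P (card U)" using span_over_subspace[OF assms] by auto
  hence "?P (dim_over K U)" unfolding dim_over_def by (rule LeastI)
  thus ?thesis using that by blast
qed

lemma in_span_over_Diff:
  fixes S :: "('a::{field,finite}^'n) set"
  assumes K: "is_subfield K" and s0: "s0 \<in> S" "d s0 \<noteq> 0"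
    and d: "\<forall>s\<in>S. d s \<in> K" and rel: "(\<Sum>s\<in>S. d s *s s) = 0"
  shows "s0 \<in> span_over K (S - {s0})"
proof -
  have "d s0 *s s0 + (\<Sum>s\<in>S - {s0}. d s *s s) = 0"
    using rel s0(1) by (simp add: sum.remove)
  hence rest: "d s0 *s s0 = - (\<Sum>s\<in>S - {s0}. d s *s s)"
    by (simp add: eq_neg_iff_add_eq_0)
  have "s0 = inverse (d s0) *s (d s0 *s s0)"
    using s0(2) by (simp add: vector_smult_assoc)
  also have "\<dots> = (\<Sum>s\<in>S - {s0}. (- d s / d s0) *s s)"
    unfolding rest
    by (simp add: vector_smult_rneg vector_scale_sum vector_smult_assoc divide_inverse
        mult.commute flip: sum_negf)
  finally have "s0 = (\<Sum>s\<in>S - {s0}. (- d s / d s0) *s s)" .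
  moreover have "\<forall>s\<in>S - {s0}. - d s / d s0 \<in> K"
    using d s0 subfield_divide[OF K] subfield_uminus[OF K] by blast
  ultimately show ?thesis
    unfolding span_over_eq[OF subfield_0[OF K]]
    by (intro CollectI exI[of _ "\<lambda>s. - d s / d s0"]) simp
qed

lemma lincomb_inj_on_minimal_spanning_set:
  fixes U :: "('a::{field,finite}^'n) set"
  assumes K: "is_subfield K" and U: "subspace_over K U"
    and S: "S \<subseteq> U" "card S = dim_over K U" "span_over K S = U"
  shows "inj_on (\<lambda>g. \<Sum>s\<in>S. g s *s s) (S \<rightarrow>\<^sub>E K)"
proof (rule inj_onI, rule ccontr)
  fix g1 g2 assume g: "g1 \<in> S \<rightarrow>\<^sub>E K" "g2 \<in> S \<rightarrow>\<^sub>E K" "g1 \<noteq> g2"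
    and eq: "(\<Sum>s\<in>S. g1 s *s s) = (\<Sum>s\<in>S. g2 s *s s)"
  obtain s0 where s0: "s0 \<in> S" "g1 s0 - g2 s0 \<noteq> 0" by (metis PiE_ext g right_minus_eq)
  have rel: "(\<Sum>s\<in>S. (g1 s - g2 s) *s s) = 0"
    using eq by (simp add: vector_sub_rdistrib sum_subtractf)
  have "s0 \<in> span_over K (S - {s0})"
    by (rule in_span_over_Diff[OF K s0 _ rel]) (use g(1,2) subfield_diff[OF K] in auto)
  hence "S \<subseteq> span_over K (S - {s0})" using span_over_superset[OF K, of "S - {s0}"] by auto
  hence "U \<subseteq> span_over K (S - {s0})"
    using span_over_minimal[OF K subspace_span_over[OF K]] S(3) by blast
  moreover have "span_over K (S - {s0}) \<subseteq> U" using span_over_minimal[OF K U] S(1) by blast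
  ultimately have "dim_over K U \<le> card (S - {s0})"
    using S(1) by (intro dim_over_le_card) auto
  thus False using S(2) s0(1) card_Diff1_less[of S s0] by simp
qed

lemma card_subspace_over:
  fixes U :: "('a::{field,finite}^'n) set"
  assumes K: "is_subfield K" and U: "subspace_over K U"
  shows "card U = card K ^ dim_over K U"
proof -
  obtain S where S: "S \<subseteq> U" "card S = dim_over K U" "span_over K S = U"
    using dim_over_spanning_set[OF K U] .
  note U_eq = S(3)[unfolded span_over_eq[OF subfield_0[OF K]]]
  have "(\<lambda>g. \<Sum>s\<in>S. g s *s s) ` (S \<rightarrow>\<^sub>E K) = U"
  proof (intro equalityI subsetI)
    fix v assume "v \<in> (\<lambda>g. \<Sum>s\<in>S. g s *s s) ` (S \<rightarrow>\<^sub>E K)"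
    then obtain g where "g \<in> S \<rightarrow>\<^sub>E K" "v = (\<Sum>s\<in>S. g s *s s)" by blast
    thus "v \<in> U" unfolding U_eq[symmetric] by blast
  next
    fix v assume "v \<in> U"
    then obtain g where g: "\<forall>s\<in>S. g s \<in> K" "v = (\<Sum>s\<in>S. g s *s s)"
      unfolding U_eq[symmetric] by blast
    show "v \<in> (\<lambda>g. \<Sum>s\<in>S. g s *s s) ` (S \<rightarrow>\<^sub>E K)"
      using g by (intro image_eqI[where x = "restrict g S"]) simp_all
  qed
  hence "card U = card (S \<rightarrow>\<^sub>E K)"
    using card_image[OF lincomb_inj_on_minimal_spanning_set[OF K U S]] by simp
  thus ?thesis using S(2) by (simp add: card_PiE)
qed

lemma dim_over_mono:
  fixes X Y :: "('a::{field,finite}^'n) set"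
  assumes K: "is_subfield K" and "subspace_over K X" "subspace_over K Y" "X \<subseteq> Y"
  shows "dim_over K X \<le> dim_over K Y"
proof -
  have "card K ^ dim_over K X \<le> card K ^ dim_over K Y"
    using card_mono[of Y X] assms(4)
    unfolding card_subspace_over[OF K assms(2)] card_subspace_over[OF K assms(3)] by simp
  thus ?thesis using card_subfield_ge_2[OF K] by simp
qed

lemma subspace_over_eq_if_dim_le:
  fixes X Y :: "('a::{field,finite}^'n) set"
  assumes K: "is_subfield K" and "subspace_over K X" "subspace_over K Y" "X \<subseteq> Y"
    and "dim_over K Y \<le> dim_over K X"
  shows "X = Y"
proof -
  have "card Y \<le> card X"
    using assms(5) card_subfield_ge_2[OF K]
    unfolding card_subspace_over[OF K assms(2)] card_subspace_over[OF K assms(3)] by simp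
  thus ?thesis using assms(4) by (metis card_seteq finite)
qed

lemma dim_over_zero: "dim_over K {0 :: 'a::{field,finite}^'n} = 0"
  using dim_over_le_card[of "{}" "{0 :: 'a^'n}" K] by (simp add: span_over_def)

section \<open>Finite fields and the trace\<close>

lemma subfield_power_card:
  fixes K :: "'a::{field,finite} set"
  assumes K: "is_subfield K" and a: "a \<in> K"
  shows "a ^ card K = a"
proof (cases "a = 0")
  case True
  thus ?thesis using card_subfield_ge_2[OF K] by simp
next
  case False
  have "(\<Prod>y\<in>K - {0}. a * y) = (\<Prod>y\<in>K - {0}. y)"
    by (rule prod.reindex_bij_witness[of _ "\<lambda>y. y / a" "\<lambda>y. a * y"])
       (use False a K in \<open>auto simp: subfield_divide subfield_mult\<close>)
  hence "a ^ card (K - {0}) = 1" by (simp add: prod.distrib)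
  moreover have "card K = Suc (card (K - {0}))"
    using subfield_0[OF K] by (metis card_Suc_Diff1 finite)
  ultimately show ?thesis by simp
qed

lemma power_CARD_eq: "(x::'a::{field,finite}) ^ CARD('a) = x"
  using subfield_power_card[OF is_subfield_UNIV] by simp

lemma inverse_eq_power:
  fixes x :: "'a::{field,finite}"
  obtains n where "inverse x = x ^ n"
proof (cases "x = 0")
  case False
  have c: "CARD('a) = Suc (Suc (CARD('a) - 2))"
    using card_subfield_ge_2[OF is_subfield_UNIV, where 'a = 'a] by simp
  have "x * (x * x ^ (CARD('a) - 2)) = x * 1"
    using power_CARD_eq[of x] by (subst (asm) c) simp
  hence "inverse x = x ^ (CARD('a) - 2)" using False by (intro inverse_unique) simp
  thus ?thesis by (rule that)
qed (use that[of 1] in simp)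

lemma is_subfield_range_of_nat: "is_subfield (range (of_nat :: nat \<Rightarrow> 'a::{field,finite}))"
proof -
  have "CHAR('a) > 0" by (rule finite_imp_CHAR_pos) simp
  hence neg: "- (of_nat a :: 'a) = of_nat ((CHAR('a) - 1) * a)" for a
    by (simp add: of_nat_mult of_nat_diff algebra_simps)
  have inv: "inverse (of_nat a :: 'a) \<in> range of_nat" for a
    by (metis inverse_eq_power of_nat_power rangeI)
  show ?thesis
    unfolding is_subfield_def
    by (auto simp: neg inv simp flip: of_nat_add of_nat_mult) (metis of_nat_0 rangeI, metis of_nat_1 rangeI)
qed

lemma card_range_of_nat: "card (range (of_nat :: nat \<Rightarrow> 'a::{field,finite})) = CHAR('a)"
proof -
  have "CHAR('a) > 0" by (rule finite_imp_CHAR_pos) simp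
  hence "range (of_nat :: nat \<Rightarrow> 'a) = of_nat ` {..<CHAR('a)}"
    by (auto simp: image_iff of_nat_eq_iff_cong_CHAR cong_def intro!: exI[of _ "_ mod CHAR('a)"])
  moreover have "inj_on (of_nat :: nat \<Rightarrow> 'a) {..<CHAR('a)}"
    by (rule inj_onI) (auto simp: of_nat_eq_iff_cong_CHAR cong_less_modulus_unique_nat)
  ultimately show ?thesis by (simp add: card_image)
qed

text \<open>\<open>F\<close> is a vector space over the prime field, realised as the subspace \<open>vec ` F\<close>
  of the coordinate space \<open>'a^1\<close>.\<close>

lemma card_subfield_CHAR_power:
  fixes F :: "'a::{field,finite} set"
  assumes F: "is_subfield F"
  obtains e where "card F = CHAR('a) ^ e"
proof -
  let ?P = "range (of_nat :: nat \<Rightarrow> 'a)"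
  have "of_nat n \<in> F" for n
    by (induction n) (auto simp: subfield_0[OF F] subfield_1[OF F] subfield_add[OF F])
  hence "subspace_over ?P (vec ` F :: ('a^1) set)"
    unfolding subspace_over_def
    by (auto simp: image_iff vec_eq_iff subfield_0[OF F] subfield_add[OF F] subfield_mult[OF F]
        intro!: bexI[of _ "_ + _"] bexI[of _ "_ * _"])
  from card_subspace_over[OF is_subfield_range_of_nat this]
  have "card F = CHAR('a) ^ dim_over ?P (vec ` F :: ('a^1) set)"
    by (simp add: card_image inj_on_def vec_eq_iff card_range_of_nat)
  thus ?thesis using that by blast
qed

locale finite_field_extension =
  fixes F :: "'a::{field,finite} set" and m :: nat
  assumes subfield: "is_subfield F"
    and CARD_eq: "CARD('a) = card F ^ m"
    and degree_pos: "m > 0"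
begin

abbreviation q where "q \<equiv> card F"

lemma q_ge_2: "q \<ge> 2"
  by (rule card_subfield_ge_2[OF subfield])

lemma q_power_eq_iff: "q ^ a = q ^ b \<longleftrightarrow> a = b"
  and q_power_le_iff: "q ^ a \<le> q ^ b \<longleftrightarrow> a \<le> b"
  using q_ge_2 by simp_all

lemma q_CHAR_power: obtains e where "q ^ i = CHAR('a) ^ e"
proof -
  obtain e where "q = CHAR('a) ^ e" using card_subfield_CHAR_power[OF subfield] .
  thus ?thesis using that[of "e * i"] by (simp add: power_mult)
qed

lemma prime_CHAR: "prime CHAR('a)"
  by (intro prime_CHAR_semidom finite_imp_CHAR_pos) simp

lemma frobenius_add: "(x + y) ^ (q ^ i) = x ^ (q ^ i) + (y::'a) ^ (q ^ i)"
  by (metis q_CHAR_power freshmans_dream' prime_CHAR)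

lemma frobenius_sum: "(sum f A) ^ (q ^ i) = (\<Sum>x\<in>A. (f x :: 'a) ^ (q ^ i))"
  by (metis q_CHAR_power freshmans_dream_sum' prime_CHAR)

lemma subfield_power_q_power: "a \<in> F \<Longrightarrow> a ^ (q ^ i) = a"
proof (induction i)
  case (Suc i)
  have "a ^ (q ^ Suc i) = (a ^ (q ^ i)) ^ q" by (simp add: power_mult mult.commute flip: power_mult)
  thus ?case using Suc subfield_power_card[OF subfield] by simp
qed simp

lemma trace_add: "trace_over F m (x + y) = trace_over F m x + trace_over F m y"
  unfolding trace_over_def by (simp add: frobenius_add sum.distrib)

lemma trace_scale: "a \<in> F \<Longrightarrow> trace_over F m (a * x) = a * trace_over F m x"
  unfolding trace_over_def by (simp add: power_mult_distrib subfield_power_q_power sum_distrib_left)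

lemma trace_power_q: "trace_over F m x ^ q = trace_over F m x"
proof -
  define f where "f i = x ^ (q ^ i)" for i
  have "trace_over F m x ^ q = (\<Sum>i<m. (x ^ (q ^ i)) ^ q)"
    using frobenius_sum[of _ _ 1] by (simp add: trace_over_def)
  also have "\<dots> = (\<Sum>i<m. f (Suc i))"
    by (simp add: f_def mult.commute flip: power_mult)
  also have "\<dots> = (\<Sum>i<m. f i)"
  proof -
    have "f 0 = f m" using power_CARD_eq[of x] by (simp add: f_def CARD_eq)
    thus ?thesis using sum.lessThan_Suc_shift[of f m] sum.lessThan_Suc[of f m] by simp
  qed
  finally show ?thesis unfolding trace_over_def f_def .
qed

lemma power_q_eq_self_iff: "y ^ q = y \<longleftrightarrow> y \<in> F"
proof -
  define p where "p = monom (1::'a) q - [:0, 1:]"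
  have "coeff p q = 1" using q_ge_2 by (simp add: p_def coeff_pCons split: nat.split)
  hence "p \<noteq> 0" by auto
  moreover have "degree p \<le> q"
    by (rule degree_le) (use q_ge_2 in \<open>auto simp: p_def coeff_pCons split: nat.split\<close>)
  ultimately have "card {y. poly p y = 0} \<le> q" using card_poly_roots_bound by fastforce
  moreover have "{y. poly p y = 0} = {y. y ^ q = y}" by (simp add: p_def poly_monom)
  moreover have "F \<subseteq> {y. y ^ q = y}" using subfield_power_card[OF subfield] by auto
  ultimately have "{y. y ^ q = y} = F" by (metis card_seteq finite)
  thus ?thesis by blast
qed

lemma trace_in_subfield: "trace_over F m x \<in> F"
  using trace_power_q power_q_eq_self_iff by blast

text \<open>The trace is a polynomial function of degree \<open>q ^ (m - 1)\<close>, which is smaller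
  than the number of field elements.\<close>

lemma trace_not_zero: obtains t where "trace_over F m t \<noteq> 0"
proof -
  define p where "p = (\<Sum>i<m. monom (1::'a) (q ^ i))"
  have coeff_p: "coeff p n = (\<Sum>i<m. if q ^ i = n then 1 else 0)" for n
    by (simp add: p_def coeff_sum)
  have "coeff p (q ^ (m - 1)) = (\<Sum>i\<in>{m - 1}. 1)"
    unfolding coeff_p
    by (rule sum.mono_neutral_cong_right) (use degree_pos q_power_eq_iff in auto)
  hence "p \<noteq> 0" by auto
  moreover have "degree p \<le> q ^ (m - 1)"
  proof (rule degree_le, intro allI impI)
    fix n assume "q ^ (m - 1) < n"
    moreover have "q ^ i \<le> q ^ (m - 1)" if "i < m" for i
      using that q_power_le_iff by simp
    ultimately show "coeff p n = 0" unfolding coeff_p by (intro sum.neutral) force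
  qed
  moreover have "q ^ (m - 1) < CARD('a)"
    using degree_pos q_ge_2 by (simp add: CARD_eq)
  ultimately have "{y. poly p y = 0} \<noteq> UNIV"
    using card_poly_roots_bound[of p] by (metis le_less_trans nat_less_le)
  moreover have "poly p y = trace_over F m y" for y
    by (simp add: p_def poly_sum poly_monom trace_over_def)
  ultimately show ?thesis using that by auto
qed

end

section \<open>Counting in subspaces\<close>

lemma card_eq_card_mult_fibre:
  assumes "finite X" "finite Y" "f ` X \<subseteq> Y" "\<And>y. y \<in> Y \<Longrightarrow> card {x\<in>X. f x = y} = c"
  shows "card X = card Y * c"
proof -
  have "card X = (\<Sum>y\<in>Y. \<Sum>x\<in>{x\<in>X. f x = y}. 1)"
    using sum.group[of X Y f "\<lambda>_. 1 :: nat"] assms(1-3) by simp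
  thus ?thesis using assms(4) by simp
qed

lemma sum_card_filter_swap:
  assumes "finite A" "finite B"
  shows "(\<Sum>a\<in>A. card {b\<in>B. P a b}) = (\<Sum>b\<in>B. card {a\<in>A. P a b})"
proof -
  have "(\<Sum>a\<in>A. \<Sum>b\<in>B. if P a b then 1 else 0 :: nat) = (\<Sum>b\<in>B. \<Sum>a\<in>A. if P a b then 1 else 0)"
    by (rule sum.swap)
  thus ?thesis using assms by (simp add: sum.inter_filter[symmetric])
qed

lemma card_subspace_eq_card_kernel:
  fixes A :: "('a::{field,finite}^'n) set"
  assumes K: "is_subfield K" and A: "subspace_over K A"
    and add: "\<And>x y. x \<in> A \<Longrightarrow> y \<in> A \<Longrightarrow> f (x + y) = f x + f y"
    and scale: "\<And>c x. c \<in> K \<Longrightarrow> x \<in> A \<Longrightarrow> f (c *s x) = c * f x"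
    and range: "\<And>x. x \<in> A \<Longrightarrow> f x \<in> K"
    and a0: "a0 \<in> A" "f a0 \<noteq> 0"
  shows "card A = card K * card {x\<in>A. f x = 0}"
proof (rule card_eq_card_mult_fibre)
  have diff: "f (x - y) = f x - f y" if "x \<in> A" "y \<in> A" for x y
    using add[of "x - y" y] subspace_over_diff[OF K A that] that by simp
  fix t assume t: "t \<in> K"
  define xt where "xt = (t / f a0) *s a0"
  have xt: "xt \<in> A" "f xt = t"
    using subspace_over_scale[OF A _ a0(1)] scale[OF _ a0(1)] subfield_divide[OF K t range[OF a0(1)]] a0(2)
    by (simp_all add: xt_def)
  have "{x\<in>A. f x = t} = (\<lambda>z. xt + z) ` {x\<in>A. f x = 0}"
  proof (intro equalityI subsetI)
    fix x assume "x \<in> {x\<in>A. f x = t}"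
    hence "x - xt \<in> {x\<in>A. f x = 0}" "x = xt + (x - xt)"
      using subspace_over_diff[OF K A _ xt(1)] diff[OF _ xt(1)] xt(2) by auto
    thus "x \<in> (\<lambda>z. xt + z) ` {x\<in>A. f x = 0}" by (metis image_eqI)
  qed (use subspace_over_add[OF A xt(1)] add[OF xt(1)] xt(2) in auto)
  thus "card {x\<in>A. f x = t} = card {x\<in>A. f x = 0}" by (simp add: card_image)
qed (use range in auto)

lemma card_set_plus_mult_card_Int:
  fixes A :: "('a::{field,finite}^'n) set"
  assumes K: "is_subfield K" and A: "subspace_over K A" and B: "subspace_over K B"
  shows "card (A + B) * card (A \<inter> B) = card A * card B"
proof -
  have "card (A \<times> B) = card (A + B) * card (A \<inter> B)"
  proof (rule card_eq_card_mult_fibre[where f = "\<lambda>(a, b). a + b"])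
    fix y assume "y \<in> A + B"
    then obtain a0 b0 where ab: "y = a0 + b0" "a0 \<in> A" "b0 \<in> B" by (auto elim!: set_plus_elim)
    have "{x \<in> A \<times> B. (\<lambda>(a, b). a + b) x = y} = (\<lambda>t. (a0 + t, b0 - t)) ` (A \<inter> B)"
    proof (intro equalityI subsetI)
      fix x assume "x \<in> {x \<in> A \<times> B. (\<lambda>(a, b). a + b) x = y}"
      then obtain a b where x: "x = (a, b)" "a \<in> A" "b \<in> B" "a + b = a0 + b0" using ab(1) by auto
      have "a - a0 = b0 - b" using x(4) by (simp add: algebra_simps)
      hence "a - a0 \<in> A \<inter> B"
        using subspace_over_diff[OF K A x(2) ab(2)] subspace_over_diff[OF K B ab(3) x(3)] by simp
      moreover have "x = (a0 + (a - a0), b0 - (a - a0))" using x(1,4) by (simp add: algebra_simps)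
      ultimately show "x \<in> (\<lambda>t. (a0 + t, b0 - t)) ` (A \<inter> B)" by (rule rev_image_eqI)
    qed (use ab subspace_over_add[OF A] subspace_over_diff[OF K B] in auto)
    moreover have "inj_on (\<lambda>t. (a0 + t, b0 - t)) (A \<inter> B)" by (rule inj_onI) simp
    ultimately show "card {x \<in> A \<times> B. (\<lambda>(a, b). a + b) x = y} = card (A \<inter> B)"
      by (simp add: card_image)
  qed auto
  thus ?thesis by (simp add: card_cartesian_product)
qed

section \<open>Nondegenerate pairings\<close>

definition orth_compl :: "('v \<Rightarrow> 'v \<Rightarrow> 'a::zero) \<Rightarrow> 'v set \<Rightarrow> 'v set" where
  "orth_compl b X = {v. \<forall>u\<in>X. b u v = 0}"

lemma orth_compl_antimono: "X \<subseteq> Y \<Longrightarrow> orth_compl b Y \<subseteq> orth_compl b X"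
  unfolding orth_compl_def by auto

text \<open>The model is the trace of an \<open>F_{q^m}\<close>-bilinear form. By \<open>scale_swap\<close>, complements
  of \<open>F_{q^m}\<close>-subspaces are again \<open>F_{q^m}\<close>-subspaces.\<close>

locale pairing =
  fixes F :: "'a::{field,finite} set" and b :: "'a^'n \<Rightarrow> 'a^'n \<Rightarrow> 'a"
  assumes subfield: "is_subfield F"
    and add_left: "b (x + y) z = b x z + b y z"
    and add_right: "b z (x + y) = b z x + b z y"
    and scale_left: "c \<in> F \<Longrightarrow> b (c *s x) y = c * b x y"
    and scale_right: "c \<in> F \<Longrightarrow> b x (c *s y) = c * b x y"
    and range: "b x y \<in> F"
    and nondegenerate_left: "x \<noteq> 0 \<Longrightarrow> \<exists>y. b x y \<noteq> 0"
    and nondegenerate_right: "y \<noteq> 0 \<Longrightarrow> \<exists>x. b x y \<noteq> 0"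
    and scale_swap: "b (c *s x) y = b x (c *s y)"
begin

lemma zero_left [simp]: "b 0 y = 0"
  using add_left[of 0 0 y] by (metis add.right_neutral add_left_cancel add_0)

lemma zero_right [simp]: "b x 0 = 0"
  using add_right[of x 0 0] by (metis add.right_neutral add_left_cancel add_0)

lemma pairing_transpose: "pairing F (\<lambda>x y. b y x)"
  by unfold_locales
    (use subfield add_left add_right scale_left scale_right range nondegenerate_left
      nondegenerate_right scale_swap in auto)

lemma subspace_orth_compl: "subspace_over F (orth_compl b X)"
  unfolding subspace_over_def orth_compl_def by (auto simp: add_right scale_right)

lemma subspace_UNIV_orth_compl:
  "subspace_over UNIV X \<Longrightarrow> subspace_over UNIV (orth_compl b X)"
  unfolding subspace_over_def orth_compl_def by (auto simp: add_right simp flip: scale_swap)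

lemma orth_compl_set_plus:
  assumes "0 \<in> A" "0 \<in> B"
  shows "orth_compl b (A + B) = orth_compl b A \<inter> orth_compl b B"
proof
  show "orth_compl b (A + B) \<subseteq> orth_compl b A \<inter> orth_compl b B"
    using orth_compl_antimono assms by (metis Int_greatest add.right_neutral add_0 set_plus_intro subsetI)
  show "orth_compl b A \<inter> orth_compl b B \<subseteq> orth_compl b (A + B)"
    unfolding orth_compl_def by (auto simp: add_left elim!: set_plus_elim)
qed

lemma card_kernel_left:
  assumes "u \<noteq> 0"
  shows "card F * card {v. b u v = 0} = CARD('a^'n)"
proof -
  obtain y where "b u y \<noteq> 0" using nondegenerate_left[OF assms] ..
  hence "CARD('a^'n) = card F * card {v\<in>UNIV. b u v = 0}"
    by (intro card_subspace_eq_card_kernel[OF subfield subspace_over_UNIV])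
      (auto simp: add_right scale_right range)
  thus ?thesis by simp
qed

lemma card_kernel_right:
  assumes U: "subspace_over F U" and v: "v \<notin> orth_compl b U"
  shows "card F * card {u\<in>U. b u v = 0} = card U"
proof -
  obtain u where "u \<in> U" "b u v \<noteq> 0" using v unfolding orth_compl_def by auto
  thus ?thesis
    by (intro card_subspace_eq_card_kernel[OF subfield U, symmetric])
      (auto simp: add_left scale_left range)
qed

text \<open>Double counting of the pairs \<open>(u, v)\<close> with \<open>u \<in> U\<close> and \<open>b u v = 0\<close>.\<close>

lemma card_orth_compl:
  assumes U: "subspace_over F U"
  shows "card (orth_compl b U) * card U = CARD('a^'n)"
proof -
  let ?V = "CARD('a^'n)" and ?R = "orth_compl b U" and ?q = "card F"
  have q: "?q \<ge> 2" by (rule card_subfield_ge_2[OF subfield])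
  have rows: "?q * card {v. b u v = 0} = ?V + (if u = 0 then (?q - 1) * ?V else 0)" for u
    using card_kernel_left[of u] q by (cases "u = 0") (simp_all add: algebra_simps)
  have cols: "?q * card {u\<in>U. b u v = 0} = card U + (if v \<in> ?R then (?q - 1) * card U else 0)" for v
  proof (cases "v \<in> ?R")
    case True
    hence "{u\<in>U. b u v = 0} = U" unfolding orth_compl_def by auto
    thus ?thesis using True q by (simp add: algebra_simps)
  qed (simp add: card_kernel_right[OF U])
  have "?q * (\<Sum>u\<in>U. card {v\<in>UNIV. b u v = 0}) = card U * ?V + (?q - 1) * ?V"
    using subspace_over_0[OF U] by (simp add: sum_distrib_left rows sum.distrib)
  moreover have "?q * (\<Sum>v\<in>UNIV. card {u\<in>U. b u v = 0}) = ?V * card U + card ?R * ((?q - 1) * card U)"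
    by (simp add: sum_distrib_left cols sum.distrib sum.If_cases)
  ultimately have "(?q - 1) * ?V = (?q - 1) * (card ?R * card U)"
    using sum_card_filter_swap[of U UNIV "\<lambda>u v. b u v = 0"] by (simp add: algebra_simps)
  thus ?thesis using q by simp
qed

lemma orth_compl_orth_compl_transpose:
  assumes X: "subspace_over F X"
  shows "orth_compl b (orth_compl (\<lambda>x y. b y x) X) = X"
proof -
  let ?L = "orth_compl (\<lambda>x y. b y x) X"
  have sub: "X \<subseteq> orth_compl b ?L" unfolding orth_compl_def by auto
  have "card (orth_compl b ?L) * card ?L = card X * card ?L"
    using card_orth_compl[OF pairing.subspace_orth_compl[OF pairing_transpose]]
      pairing.card_orth_compl[OF pairing_transpose X] by (simp add: mult.commute)
  moreover have "card ?L \<noteq> 0"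
    using subspace_over_0[OF pairing.subspace_orth_compl[OF pairing_transpose], of X]
    by (auto simp: card_eq_0_iff)
  ultimately have "card X = card (orth_compl b ?L)" by simp
  thus ?thesis using card_subset_eq[OF _ sub] by simp
qed

lemma card_orth_compl_Int:
  assumes U: "subspace_over F U" and W: "subspace_over F W"
  shows "card (orth_compl b U \<inter> orth_compl b W) * card U * card W = CARD('a^'n) * card (U \<inter> W)"
proof -
  have "orth_compl b U \<inter> orth_compl b W = orth_compl b (U + W)"
    using orth_compl_set_plus subspace_over_0[OF U] subspace_over_0[OF W] by simp
  moreover have "card (orth_compl b (U + W)) * card (U + W) = CARD('a^'n)"
    by (rule card_orth_compl[OF subspace_over_set_plus[OF U W]])
  moreover have "card (U + W) * card (U \<inter> W) = card U * card W"
    by (rule card_set_plus_mult_card_Int[OF subfield U W])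
  ultimately show ?thesis by (metis mult.assoc)
qed

end

definition line :: "'a::field^'n \<Rightarrow> ('a^'n) set" where
  "line w = range (\<lambda>c. c *s w)"

lemma subspace_over_line: "subspace_over K (line w)"
  unfolding subspace_over_def line_def
proof (intro conjI ballI)
  show "0 \<in> range (\<lambda>c. c *s w)" by (rule range_eqI[of _ _ 0]) simp
next
  fix x y assume "x \<in> range (\<lambda>c. c *s w)" "y \<in> range (\<lambda>c. c *s w)"
  then obtain a b where "x = a *s w" "y = b *s w" by blast
  thus "x + y \<in> range (\<lambda>c. c *s w)" by (metis rangeI vector_sadd_rdistrib)
next
  fix c x assume "x \<in> range (\<lambda>c. c *s w)"
  then obtain a where "x = a *s w" by blast
  thus "c *s x \<in> range (\<lambda>c. c *s w)" by (metis rangeI vector_smult_assoc)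
qed

lemma zero_in_line: "0 \<in> line w"
  by (rule subspace_over_0[OF subspace_over_line])

lemma line_subset: "subspace_over UNIV W \<Longrightarrow> w \<in> W \<Longrightarrow> line w \<subseteq> W"
  unfolding line_def by (auto intro: subspace_over_scale)

lemma card_line:
  fixes w :: "'a::{field,finite}^'n"
  assumes "w \<noteq> 0"
  shows "card (line w) = CARD('a)"
proof -
  have "inj (\<lambda>c::'a. c *s w)" by (rule injI) (use assms in simp)
  thus ?thesis unfolding line_def by (simp add: card_image)
qed

lemma in_line_commute:
  assumes "a \<noteq> 0" "a \<in> line w"
  shows "w \<in> line a"
proof -
  obtain c where c: "a = c *s w" using assms(2) unfolding line_def by blast
  hence "c \<noteq> 0" using assms(1) by auto
  hence "w = inverse c *s a" using c by (simp add: vector_smult_assoc)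
  thus ?thesis unfolding line_def by blast
qed

lemma Int_line_eq_zero:
  assumes X: "subspace_over UNIV X" and w: "w \<notin> X"
  shows "X \<inter> line w = {0}"
proof (intro equalityI subsetI)
  fix x assume x: "x \<in> X \<inter> line w"
  show "x \<in> {0}"
  proof (rule ccontr)
    assume "x \<notin> {0}"
    hence "line x \<subseteq> X" "w \<in> line x" using x line_subset[OF X] in_line_commute by auto
    thus False using w by blast
  qed
qed (use subspace_over_0[OF X] zero_in_line in auto)

lemma Sigma_lines_swap:
  fixes U W :: "('a::field^'n) set"
  assumes W: "subspace_over UNIV W"
  shows "(\<lambda>(w, a). (a, w)) ` (SIGMA w:W - {0}. U \<inter> line w - {0}) = (SIGMA a:U \<inter> W - {0}. line a - {0})"
proof (intro equalityI subsetI)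
  fix p assume "p \<in> (\<lambda>(w, a). (a, w)) ` (SIGMA w:W - {0}. U \<inter> line w - {0})"
  then obtain w a where p: "p = (a, w)" "w \<in> W" "w \<noteq> 0" "a \<in> U" "a \<in> line w" "a \<noteq> 0" by auto
  have "a \<in> W" using line_subset[OF W p(2)] p(5) by blast
  thus "p \<in> (SIGMA a:U \<inter> W - {0}. line a - {0})" using p in_line_commute by auto
next
  fix p assume "p \<in> (SIGMA a:U \<inter> W - {0}. line a - {0})"
  then obtain w a where p: "p = (a, w)" "a \<in> U" "a \<in> W" "a \<noteq> 0" "w \<in> line a" "w \<noteq> 0" by auto
  have "w \<in> W" using line_subset[OF W p(3)] p(5) by blast
  hence "(w, a) \<in> (SIGMA w:W - {0}. U \<inter> line w - {0})" using p in_line_commute by auto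
  thus "p \<in> (\<lambda>(w, a). (a, w)) ` (SIGMA w:W - {0}. U \<inter> line w - {0})" using p(1) by force
qed

text \<open>If \<open>U\<close> met every line of an \<open>F_{q^m}\<close>-plane \<open>W\<close> in exactly \<open>q\<close> vectors, both sides
  would count the pairs of nonzero vectors \<open>(w, a)\<close> with \<open>w \<in> W\<close> and \<open>a \<in> U \<inter> line w\<close>,
  where \<open>q ^ d = |U \<inter> W|\<close>.\<close>

lemma lines_count_ne:
  fixes Q M d :: nat
  assumes Q: "Q \<ge> 2" and M: "M \<ge> 2"
  shows "(Q ^ (2 * M) - 1) * (Q - 1) \<noteq> (Q ^ d - 1) * (Q ^ M - 1)"
proof
  assume eq: "(Q ^ (2 * M) - 1) * (Q - 1) = (Q ^ d - 1) * (Q ^ M - 1)"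
  define x where "x = int Q ^ M"
  have "int Q ^ 2 \<le> x" unfolding x_def using Q M by (intro power_increasing) auto
  moreover have "int Q < int Q ^ 2" using Q by (simp add: power2_eq_square)
  ultimately have x: "x > int Q" by linarith
  have "(x * x - 1) * (int Q - 1) = (int Q ^ d - 1) * (x - 1)"
    using arg_cong[OF eq, of int] Q by (simp add: x_def of_nat_diff mult_2 power_add)
  hence "(x - 1) * ((x + 1) * (int Q - 1)) = (x - 1) * (int Q ^ d - 1)" by (simp add: algebra_simps)
  moreover have "x - 1 \<noteq> 0" using x Q by simp
  ultimately have "(x + 1) * (int Q - 1) = int Q ^ d - 1" by simp
  hence d: "int Q ^ d = x * int Q - x + int Q" by (simp add: algebra_simps)
  have "x * int Q \<ge> x * 2" using x Q by simp
  hence "x < int Q ^ d" using d x Q by linarith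
  hence "M < d" using Q unfolding x_def by (simp add: power_strict_increasing_iff)
  hence "int Q ^ Suc M \<le> int Q ^ d" using Q by (intro power_increasing) auto
  thus False using d x unfolding x_def by simp
qed

section \<open>The trace form\<close>

locale trace_form = finite_field_extension F m for F :: "'a::{field,finite} set" and m +
  fixes \<sigma> :: "'a^'n \<Rightarrow> 'a^'n \<Rightarrow> 'a"
  assumes bilinear: "bilinear_form \<sigma>" and nondegenerate: "nondegenerate_form \<sigma>"
begin

abbreviation \<sigma>' where "\<sigma>' u v \<equiv> trace_over F m (\<sigma> u v)"

lemma pairing_trace_form: "pairing F \<sigma>'"
proof unfold_locales
  fix x y z :: "'a^'n" and c :: 'a
  show "\<sigma>' (x + y) z = \<sigma>' x z + \<sigma>' y z" "\<sigma>' z (x + y) = \<sigma>' z x + \<sigma>' z y"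
    "\<sigma>' (c *s x) y = \<sigma>' x (c *s y)"
    using bilinear by (simp_all add: bilinear_form_def trace_add)
  show "c \<in> F \<Longrightarrow> \<sigma>' (c *s x) y = c * \<sigma>' x y" "c \<in> F \<Longrightarrow> \<sigma>' x (c *s y) = c * \<sigma>' x y"
    using bilinear by (simp_all add: bilinear_form_def trace_scale)
  show "\<sigma>' x y \<in> F" by (rule trace_in_subfield)
next
  obtain t where t: "trace_over F m t \<noteq> 0" by (rule trace_not_zero)
  fix x y :: "'a^'n"
  assume "x \<noteq> 0"
  then obtain y where "\<sigma> x y \<noteq> 0" using nondegenerate unfolding nondegenerate_form_def by blast
  hence "\<sigma> x ((t / \<sigma> x y) *s y) = t" using bilinear by (simp add: bilinear_form_def)
  thus "\<exists>y. \<sigma>' x y \<noteq> 0" using t by metis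
next
  obtain t where t: "trace_over F m t \<noteq> 0" by (rule trace_not_zero)
  fix x y :: "'a^'n"
  assume "y \<noteq> 0"
  then obtain x where "\<sigma> x y \<noteq> 0" using nondegenerate unfolding nondegenerate_form_def by blast
  hence "\<sigma> ((t / \<sigma> x y) *s x) y = t" using bilinear by (simp add: bilinear_form_def)
  thus "\<exists>x. \<sigma>' x y \<noteq> 0" using t by metis
qed (rule subfield)

sublocale pairing F \<sigma>' by (rule pairing_trace_form)

lemma dual_system_eq_orth_compl: "dual_system F m \<sigma> X = orth_compl \<sigma>' X"
  by (simp add: dual_system_def orth_compl_def)

lemma card_subspace_over_subfield: "subspace_over F (X :: ('a^'n) set) \<Longrightarrow> card X = q ^ dim_over F X"
  by (rule card_subspace_over[OF subfield])

lemma card_subspace_over_UNIV: "subspace_over UNIV (X :: ('a^'n) set) \<Longrightarrow> card X = q ^ (m * dim_over UNIV X)"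
  using card_subspace_over[OF is_subfield_UNIV, of X] by (simp add: CARD_eq power_mult)

lemma CARD_vec_eq: "CARD('a^'n) = q ^ (CARD('n) * m)"
  by (simp add: CARD_eq mult.commute flip: power_mult)

lemma dim_over_UNIV_line: "(w :: 'a^'n) \<noteq> 0 \<Longrightarrow> dim_over UNIV (line w) = 1"
  using card_subspace_over_UNIV[OF subspace_over_line, of w] card_line[of w] degree_pos
  by (simp add: CARD_eq q_power_eq_iff)

lemma dim_over_UNIV_add_eq:
  fixes X Y :: "('a^'n) set"
  assumes "subspace_over UNIV X" "subspace_over UNIV Y" "card X * card Y = CARD('a^'n)"
  shows "dim_over UNIV X + dim_over UNIV Y = CARD('n)"
proof -
  have "q ^ (m * (dim_over UNIV X + dim_over UNIV Y)) = q ^ (m * CARD('n))"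
    using assms card_subspace_over_UNIV CARD_vec_eq by (simp add: power_add distrib_left mult.commute)
  thus ?thesis using degree_pos q_power_eq_iff by simp
qed

lemma dim_over_UNIV_orth_compl:
  "subspace_over UNIV W \<Longrightarrow> dim_over UNIV (orth_compl \<sigma>' W) + dim_over UNIV W = CARD('n)"
  by (intro dim_over_UNIV_add_eq subspace_UNIV_orth_compl card_orth_compl[OF subspace_over_UNIV_imp])

lemma dim_over_UNIV_orth_compl_transpose:
  "subspace_over UNIV W \<Longrightarrow> dim_over UNIV (orth_compl (\<lambda>x y. \<sigma>' y x) W) + dim_over UNIV W = CARD('n)"
  by (intro dim_over_UNIV_add_eq pairing.subspace_UNIV_orth_compl[OF pairing_transpose]
      pairing.card_orth_compl[OF pairing_transpose subspace_over_UNIV_imp])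

lemma dim_over_UNIV_set_plus_line:
  fixes X :: "('a^'n) set"
  assumes X: "subspace_over UNIV X" and w: "w \<notin> X"
  shows "dim_over UNIV (X + line w) = dim_over UNIV X + 1"
proof -
  have "w \<noteq> 0" using w subspace_over_0[OF X] by blast
  have "card (X + line w) * card (X \<inter> line w) = card X * card (line w)"
    by (rule card_set_plus_mult_card_Int[OF is_subfield_UNIV X subspace_over_line])
  hence "q ^ (m * dim_over UNIV (X + line w)) = q ^ (m * (dim_over UNIV X + 1))"
    using Int_line_eq_zero[OF X w] card_line[OF \<open>w \<noteq> 0\<close>]
      card_subspace_over_UNIV[OF X] card_subspace_over_UNIV[OF subspace_over_set_plus[OF X subspace_over_line]]
    by (simp add: CARD_eq power_add)
  hence "m * dim_over UNIV (X + line w) = m * (dim_over UNIV X + 1)" by (simp only: q_power_eq_iff)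
  thus ?thesis using degree_pos by (simp only: mult_left_cancel neq0_conv)
qed

lemma exists_nonzero_orth_compl_transpose:
  fixes S :: "('a^'n) set"
  assumes S: "subspace_over UNIV S" "S \<noteq> UNIV"
  obtains w where "w \<in> orth_compl (\<lambda>x y. \<sigma>' y x) S" "w \<noteq> 0"
proof -
  let ?L = "orth_compl (\<lambda>x y. \<sigma>' y x) S"
  have "card ?L * card S = CARD('a^'n)"
    by (rule pairing.card_orth_compl[OF pairing_transpose subspace_over_UNIV_imp[OF S(1)]])
  moreover have "card S < CARD('a^'n)" using S(2) by (intro psubset_card_mono) auto
  ultimately have "\<not> card ?L \<le> 1" by (metis mult_le_mono1 mult_1 not_le)
  hence "\<not> ?L \<subseteq> {0}" using card_mono[of "{0}" ?L] by auto
  thus ?thesis using that by blast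
qed

lemma exists_orth_compl_between:
  fixes S H :: "('a^'n) set"
  assumes S: "subspace_over UNIV S" and H: "subspace_over UNIV H" and "S \<subseteq> H" "S \<noteq> H"
  obtains W where "subspace_over UNIV W"
    "dim_over UNIV W = dim_over UNIV (orth_compl (\<lambda>x y. \<sigma>' y x) H) + 1"
    "S \<subseteq> orth_compl \<sigma>' W" "orth_compl \<sigma>' W \<subseteq> H"
proof -
  let ?W1 = "orth_compl (\<lambda>x y. \<sigma>' y x) H" and ?LS = "orth_compl (\<lambda>x y. \<sigma>' y x) S"
  have W1: "subspace_over UNIV ?W1"
    by (rule pairing.subspace_UNIV_orth_compl[OF pairing_transpose H])
  have LS: "subspace_over UNIV ?LS"
    by (rule pairing.subspace_UNIV_orth_compl[OF pairing_transpose S])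
  have H_eq: "orth_compl \<sigma>' ?W1 = H"
    by (rule orth_compl_orth_compl_transpose[OF subspace_over_UNIV_imp[OF H]])
  have S_eq: "orth_compl \<sigma>' ?LS = S"
    by (rule orth_compl_orth_compl_transpose[OF subspace_over_UNIV_imp[OF S]])
  have "?W1 \<subseteq> ?LS" using \<open>S \<subseteq> H\<close> by (rule orth_compl_antimono)
  moreover have "?W1 \<noteq> ?LS" using H_eq S_eq \<open>S \<noteq> H\<close> by metis
  ultimately obtain w where w: "w \<in> ?LS" "w \<notin> ?W1" by blast
  let ?W = "?W1 + line w"
  have "?W \<subseteq> ?LS"
  proof
    fix x assume "x \<in> ?W"
    then obtain a c where "x = a + c" "a \<in> ?W1" "c \<in> line w" by (auto elim: set_plus_elim)
    thus "x \<in> ?LS" using \<open>?W1 \<subseteq> ?LS\<close> line_subset[OF LS w(1)] subspace_over_add[OF LS] by blast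
  qed
  hence "S \<subseteq> orth_compl \<sigma>' ?W" using S_eq orth_compl_antimono by metis
  moreover have "?W1 \<subseteq> ?W" using zero_in_line by (metis add.right_neutral set_plus_intro subsetI)
  hence "orth_compl \<sigma>' ?W \<subseteq> H" using H_eq orth_compl_antimono by metis
  ultimately show ?thesis
    using that subspace_over_set_plus[OF W1 subspace_over_line] dim_over_UNIV_set_plus_line[OF W1 w(2)]
    by blast
qed

lemma dim_orth_compl_Int:
  assumes U: "subspace_over F U" and W: "subspace_over UNIV W"
  shows "dim_over F (orth_compl \<sigma>' U \<inter> orth_compl \<sigma>' W) + dim_over F U + m * dim_over UNIV W
    = CARD('n) * m + dim_over F (U \<inter> W)"
proof -
  have WF: "subspace_over F W" by (rule subspace_over_UNIV_imp[OF W])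
  have "q ^ (dim_over F (orth_compl \<sigma>' U \<inter> orth_compl \<sigma>' W) + dim_over F U + m * dim_over UNIV W)
      = q ^ (CARD('n) * m + dim_over F (U \<inter> W))"
    using card_orth_compl_Int[OF U WF] CARD_vec_eq card_subspace_over_UNIV[OF W]
      card_subspace_over_subfield[OF U] card_subspace_over_subfield[OF subspace_over_Int[OF U WF]]
      card_subspace_over_subfield[OF subspace_over_Int[OF subspace_orth_compl subspace_orth_compl]]
    by (simp add: power_add)
  thus ?thesis using q_power_eq_iff by blast
qed

end

section \<open>Scattered systems of half dimension\<close>

locale half_dimensional_system = trace_form F m \<sigma>
  for F :: "'a::{field,finite} set" and m and \<sigma> :: "'a^'n \<Rightarrow> 'a^'n \<Rightarrow> 'a" +
  fixes N :: nat and U :: "('a^'n) set"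
  assumes dim_vec_eq: "CARD('n) * m = 2 * N"
    and system: "is_system F N U"
begin

abbreviation U' where "U' \<equiv> orth_compl \<sigma>' U"

lemma subspace_U: "subspace_over F U"
  using system by (simp add: is_system_def)

lemma card_U: "card U = q ^ N"
  using card_subspace_over_subfield[OF subspace_U] system by (simp add: is_system_def)

lemma CARD_vec_eq_N: "CARD('a^'n) = q ^ (2 * N)"
  using CARD_vec_eq dim_vec_eq by simp

lemma card_U': "card U' = q ^ N"
proof -
  have "card U' * q ^ N = q ^ N * q ^ N"
    using card_orth_compl[OF subspace_U] card_U CARD_vec_eq_N by (simp add: mult_2 power_add)
  thus ?thesis using q_ge_2 by (auto simp: card_eq_0_iff)
qed

lemma dim_U': "dim_over F U' = N"
  using card_subspace_over_subfield[OF subspace_orth_compl] card_U' q_power_eq_iff by simp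

lemma degree_ge_2: "m \<ge> 2"
proof (rule ccontr)
  assume "\<not> m \<ge> 2"
  hence "m = 1" using degree_pos by simp
  hence "F = UNIV" using CARD_eq by (metis card_subset_eq finite power_one_right subset_UNIV)
  hence "U = UNIV" using system span_over_subspace[OF is_subfield_UNIV, of U]
    by (simp add: is_system_def)
  hence "q ^ N = q ^ (2 * N)" using card_U CARD_vec_eq_N by simp
  thus False using \<open>m = 1\<close> dim_vec_eq q_power_eq_iff by auto
qed

lemma dim_U'_Int_orth_compl:
  assumes "subspace_over UNIV W"
  shows "dim_over F (U' \<inter> orth_compl \<sigma>' W) + m * dim_over UNIV W = N + dim_over F (U \<inter> W)"
  using dim_orth_compl_Int[OF subspace_U assms] system dim_vec_eq by (simp add: is_system_def)

lemma evasive_2_iff_dual_evasive: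
  "evasive F 2 (int m - 1) U \<longleftrightarrow> evasive F (int CARD('n) - 2) (int N - int m - 1) U'"
proof
  assume E: "evasive F 2 (int m - 1) U"
  show "evasive F (int CARD('n) - 2) (int N - int m - 1) U'"
    unfolding evasive_def
  proof (intro allI impI, elim conjE)
    fix H :: "('a^'n) set" assume H: "subspace_over UNIV H" "int (dim_over UNIV H) = int CARD('n) - 2"
    let ?W = "orth_compl (\<lambda>x y. \<sigma>' y x) H"
    have W: "subspace_over UNIV ?W" "dim_over UNIV ?W = 2"
      using pairing.subspace_UNIV_orth_compl[OF pairing_transpose H(1)]
        dim_over_UNIV_orth_compl_transpose[OF H(1)] H(2) by auto
    have "orth_compl \<sigma>' ?W = H"
      by (rule orth_compl_orth_compl_transpose[OF subspace_over_UNIV_imp[OF H(1)]])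
    hence "dim_over F (U' \<inter> H) + m * 2 = N + dim_over F (U \<inter> ?W)"
      using dim_U'_Int_orth_compl[OF W(1)] W(2) by simp
    moreover have "int (dim_over F (U \<inter> ?W)) \<le> int m - 1" using E W unfolding evasive_def by auto
    ultimately show "int (dim_over F (U' \<inter> H)) \<le> int N - int m - 1" by linarith
  qed
next
  assume E: "evasive F (int CARD('n) - 2) (int N - int m - 1) U'"
  show "evasive F 2 (int m - 1) U"
    unfolding evasive_def
  proof (intro allI impI, elim conjE)
    fix W :: "('a^'n) set" assume W: "subspace_over UNIV W" "int (dim_over UNIV W) = 2"
    let ?H = "orth_compl \<sigma>' W"
    have H: "subspace_over UNIV ?H" "int (dim_over UNIV ?H) = int CARD('n) - 2"
      using subspace_UNIV_orth_compl[OF W(1)] dim_over_UNIV_orth_compl[OF W(1)] W(2) by auto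
    have "dim_over F (U' \<inter> ?H) + m * 2 = N + dim_over F (U \<inter> W)"
      using dim_U'_Int_orth_compl[OF W(1)] W(2) by simp
    moreover have "int (dim_over F (U' \<inter> ?H)) \<le> int N - int m - 1" using E H unfolding evasive_def by auto
    ultimately show "int (dim_over F (U \<inter> W)) \<le> int m - 1" by linarith
  qed
qed

lemma dim_Int_line_le:
  assumes "scattered F U" "w \<noteq> 0"
  shows "dim_over F (U \<inter> line w) \<le> 1"
  using assms subspace_over_line dim_over_UNIV_line unfolding scattered_def evasive_def by fastforce

lemma card_Int_line_le:
  assumes "scattered F U" "w \<noteq> 0"
  shows "card (U \<inter> line w) \<le> q"
  using card_subspace_over_subfield[OF subspace_over_Int[OF subspace_U subspace_over_line]]
    q_power_le_iff[of _ 1] dim_Int_line_le[OF assms] by simp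

lemma card_Int_line:
  assumes "scattered F U" "w \<noteq> 0" "U \<inter> line w \<noteq> {0}"
  shows "card (U \<inter> line w) = q"
proof (rule antisym)
  obtain x where x: "x \<in> U \<inter> line w" "x \<noteq> 0"
    using assms(3) zero_in_line subspace_over_0[OF subspace_U] by blast
  have "(\<lambda>c. c *s x) ` F \<subseteq> U \<inter> line w"
    using subspace_over_scale[OF subspace_U] subspace_over_scale[OF subspace_over_line] x(1) by auto
  moreover have "inj_on (\<lambda>c. c *s x) F" by (rule inj_onI) (use x(2) in simp)
  ultimately show "q \<le> card (U \<inter> line w)" by (metis card_image card_mono finite)
qed (rule card_Int_line_le[OF assms(1,2)])

lemma span_U':
  assumes "scattered F U"
  shows "span_over UNIV U' = UNIV"
proof (rule ccontr)
  let ?S = "span_over UNIV U'"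
  have S: "subspace_over UNIV ?S" by (rule subspace_span_over[OF is_subfield_UNIV])
  assume "?S \<noteq> UNIV"
  then obtain w where w: "w \<in> orth_compl (\<lambda>x y. \<sigma>' y x) ?S" "w \<noteq> 0"
    using exists_nonzero_orth_compl_transpose[OF S] by blast
  have "line w \<subseteq> orth_compl (\<lambda>x y. \<sigma>' y x) ?S"
    by (rule line_subset[OF pairing.subspace_UNIV_orth_compl[OF pairing_transpose S] w(1)])
  hence "?S \<subseteq> orth_compl \<sigma>' (line w)"
    using orth_compl_antimono orth_compl_orth_compl_transpose[OF subspace_over_UNIV_imp[OF S]] by metis
  hence "U' \<inter> orth_compl \<sigma>' (line w) = U'" using span_over_superset[OF is_subfield_UNIV] by blast
  hence "N + m = N + dim_over F (U \<inter> line w)"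
    using dim_U'_Int_orth_compl[OF subspace_over_line, of w] dim_over_UNIV_line[OF w(2)] dim_U' by simp
  moreover have "dim_over F (U \<inter> line w) \<le> 1" by (rule dim_Int_line_le[OF assms w(2)])
  ultimately show False using degree_ge_2 by simp
qed

lemma is_system_U': "scattered F U \<Longrightarrow> is_system F N U'"
  unfolding is_system_def using subspace_orth_compl dim_U' span_U' by simp

lemma exists_line_Int_eq_zero:
  assumes scat: "scattered F U" and W: "subspace_over UNIV W" "dim_over UNIV W = 2"
  shows "\<exists>w\<in>W. w \<noteq> 0 \<and> U \<inter> line w = {0}"
proof (rule ccontr)
  assume "\<not> ?thesis"
  hence meets: "U \<inter> line w \<noteq> {0}" if "w \<in> W - {0}" for w using that by blast
  have "card (U \<inter> line w - {0}) = q - 1" if "w \<in> W - {0}" for w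
  proof -
    have "0 \<in> U \<inter> line w" using zero_in_line subspace_over_0[OF subspace_U] by blast
    thus ?thesis using card_Int_line[OF scat _ meets[OF that]] that by (simp add: card_Diff_singleton)
  qed
  hence "card (SIGMA w:W - {0}. U \<inter> line w - {0}) = (q ^ (2 * m) - 1) * (q - 1)"
    using card_subspace_over_UNIV[OF W(1)] W(2) subspace_over_0[OF W(1)]
    by (simp add: card_SigmaI card_Diff_singleton mult.commute)
  moreover have "card (SIGMA w:W - {0}. U \<inter> line w - {0}) = (q ^ dim_over F (U \<inter> W) - 1) * (q ^ m - 1)"
  proof -
    have "inj_on (\<lambda>(w, a). (a, w)) (SIGMA w:W - {0}. U \<inter> line w - {0})"
      by (rule swap_inj_on)
    hence "card (SIGMA w:W - {0}. U \<inter> line w - {0}) = card (SIGMA a:U \<inter> W - {0}. line a - {0})"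
      unfolding Sigma_lines_swap[OF W(1), symmetric] by (rule card_image[symmetric])
    also have "\<dots> = (\<Sum>a\<in>U \<inter> W - {0}. q ^ m - 1)"
      by (simp add: card_SigmaI card_Diff_singleton zero_in_line card_line CARD_eq)
    also have "\<dots> = (q ^ dim_over F (U \<inter> W) - 1) * (q ^ m - 1)"
      using card_subspace_over_subfield[OF subspace_over_Int[OF subspace_U subspace_over_UNIV_imp[OF W(1)]]]
        subspace_over_0[OF subspace_U] subspace_over_0[OF W(1)] by (simp add: card_Diff_singleton)
    finally show ?thesis .
  qed
  ultimately show False using lines_count_ne[OF q_ge_2 degree_ge_2] by (metis (no_types))
qed

lemma evasive_2_imp_cutting_dual:
  assumes E: "evasive F 2 (int m - 1) U"
  shows "cutting F U'"
  unfolding cutting_def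
proof (intro allI impI, elim conjE)
  fix H :: "('a^'n) set" assume H: "subspace_over UNIV H" "dim_over UNIV H = CARD('n) - 1"
  let ?S = "span_over UNIV (H \<inter> U')"
  have S: "subspace_over UNIV ?S" by (rule subspace_span_over[OF is_subfield_UNIV])
  have "?S \<subseteq> H" by (rule span_over_minimal[OF is_subfield_UNIV H(1)]) blast
  show "?S = H"
  proof (rule ccontr)
    assume "?S \<noteq> H"
    let ?W1 = "orth_compl (\<lambda>x y. \<sigma>' y x) H"
    have W1: "subspace_over UNIV ?W1"
      by (rule pairing.subspace_UNIV_orth_compl[OF pairing_transpose H(1)])
    have "CARD('n) > 0" by (rule finite_UNIV_card_ge_0) simp
    hence dim_W1: "dim_over UNIV ?W1 = 1"
      using dim_over_UNIV_orth_compl_transpose[OF H(1)] H(2) by linarith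
    obtain W where W: "subspace_over UNIV W" "dim_over UNIV W = 2"
      "?S \<subseteq> orth_compl \<sigma>' W" "orth_compl \<sigma>' W \<subseteq> H"
      using exists_orth_compl_between[OF S H(1) \<open>?S \<subseteq> H\<close> \<open>?S \<noteq> H\<close>]
      unfolding dim_W1 one_add_one by blast
    have "U' \<inter> orth_compl \<sigma>' W = U' \<inter> H"
      using W(3,4) span_over_superset[OF is_subfield_UNIV, of "H \<inter> U'"] by blast
    hence "dim_over F (U' \<inter> H) + m * 2 = N + dim_over F (U \<inter> W)"
      using dim_U'_Int_orth_compl[OF W(1)] W(2) by simp
    moreover have "dim_over F (U' \<inter> H) + m * 1 = N + dim_over F (U \<inter> ?W1)"
      using dim_U'_Int_orth_compl[OF W1] dim_W1
        orth_compl_orth_compl_transpose[OF subspace_over_UNIV_imp[OF H(1)]] by simp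
    moreover have "int (dim_over F (U \<inter> W)) \<le> int m - 1" using E W(1,2) unfolding evasive_def by auto
    ultimately show False by linarith
  qed
qed

lemma cutting_dual_imp_evasive_2:
  assumes scat: "scattered F U" and C: "cutting F U'"
  shows "evasive F 2 (int m - 1) U"
  unfolding evasive_def
proof (intro allI impI, elim conjE, rule ccontr)
  fix W :: "('a^'n) set" assume W: "subspace_over UNIV W" "int (dim_over UNIV W) = 2"
    and big: "\<not> int (dim_over F (U \<inter> W)) \<le> int m - 1"
  obtain w where w: "w \<in> W" "w \<noteq> 0" "U \<inter> line w = {0}"
    using exists_line_Int_eq_zero[OF scat W(1)] W(2) by auto
  let ?H = "orth_compl \<sigma>' (line w)" and ?H2 = "orth_compl \<sigma>' W"
  have H: "subspace_over UNIV ?H" "dim_over UNIV ?H = CARD('n) - 1"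
    using subspace_UNIV_orth_compl[OF subspace_over_line]
      dim_over_UNIV_orth_compl[OF subspace_over_line, of w] dim_over_UNIV_line[OF w(2)] by auto
  have H2: "subspace_over UNIV ?H2" "dim_over UNIV ?H2 + 2 = CARD('n)"
    using subspace_UNIV_orth_compl[OF W(1)] dim_over_UNIV_orth_compl[OF W(1)] W(2) by auto
  have "?H2 \<subseteq> ?H" by (rule orth_compl_antimono[OF line_subset[OF W(1) w(1)]])
  have "dim_over F (U' \<inter> ?H) + m = N"
    using dim_U'_Int_orth_compl[OF subspace_over_line, of w] dim_over_UNIV_line[OF w(2)] w(3)
    by (simp add: dim_over_zero)
  moreover have "dim_over F (U' \<inter> ?H2) + m * 2 = N + dim_over F (U \<inter> W)"
    using dim_U'_Int_orth_compl[OF W(1)] W(2) by simp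
  ultimately have "U' \<inter> ?H2 = U' \<inter> ?H"
    using big \<open>?H2 \<subseteq> ?H\<close> subspace_orth_compl subspace_over_UNIV_imp[OF H(1)] subspace_over_UNIV_imp[OF H2(1)]
    by (intro subspace_over_eq_if_dim_le[OF subfield] subspace_over_Int) auto
  hence "span_over UNIV (?H \<inter> U') \<subseteq> ?H2"
    by (intro span_over_minimal[OF is_subfield_UNIV H2(1)]) blast
  moreover have "span_over UNIV (?H \<inter> U') = ?H" using C H unfolding cutting_def by blast
  ultimately have "dim_over UNIV ?H \<le> dim_over UNIV ?H2"
    by (intro dim_over_mono[OF is_subfield_UNIV H(1) H2(1)]) simp
  thus False using H(2) H2(2) by simp
qed

end

theorem proposition3p9:
  fixes F :: "'a::{field,finite} set" and m :: nat
    and \<sigma> :: "'a^'n \<Rightarrow> 'a^'n \<Rightarrow> 'a" and U :: "('a^'n) set"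
  assumes "is_subfield F"
    and "card (UNIV :: 'a set) = card F ^ m"
    and "m > 0"
    and "even (CARD('n) * m)"
    and "bilinear_form \<sigma>" and "nondegenerate_form \<sigma>"
    and "is_system F ((CARD('n) * m) div 2) U"
    and "scattered F U"
  shows "(evasive F 2 (int m - 1) U \<longleftrightarrow>
            (is_system F ((CARD('n) * m) div 2) (dual_system F m \<sigma> U) \<and>
             evasive F (int CARD('n) - 2) (int ((CARD('n) * m) div 2) - int m - 1) (dual_system F m \<sigma> U)))
       \<and> (evasive F 2 (int m - 1) U \<longleftrightarrow>
            (is_system F ((CARD('n) * m) div 2) (dual_system F m \<sigma> U) \<and>
             cutting F (dual_system F m \<sigma> U)))"
proof -
  interpret half_dimensional_system F m \<sigma> "CARD('n) * m div 2" U
    by unfold_locales (use assms in auto)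
  show ?thesis
    unfolding dual_system_eq_orth_compl
    using is_system_U'[OF assms(8)] evasive_2_iff_dual_evasive evasive_2_imp_cutting_dual
      cutting_dual_imp_evasive_2[OF assms(8)] by blast
qed

end
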